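(* Let $\gamma>0$, $y>0$ and $x_1\ge0$ be real numbers with $y+4x_1<1$. Then the function $\sigma\mapsto I_{y,x_1}(\sigma)$ is strictly increasing on its domain $\{\sigma\ge0: y+4x_1+\sigma/\gamma<1\}$.
   Context: $E(x)=-x\log_qx-(1-x)\log_q(1-x)$ for $0<x<1$, $E(0)=E(1)=0$. $S(\sigma,y,x,t_1)=E(t_1)+(1-t_1)E\bigl(\frac{y+x+t_1}{1-t_1}\bigr)+Z$, where $Z=(y+\sigma/\gamma+t_1)E\bigl(\frac{y+x+t_1}{y+\sigma/\gamma+t_1}\bigr)$ if $\frac{y+x+t_1}{y+\sigma/\gamma+t_1}\ge1-\frac1q$ and $Z=(y+\sigma/\gamma+t_1)-(y+x+t_1)\log_q(q-1)$ otherwise. $I_{y,x_1}(\sigma)=\max S(\sigma,y,x,t_1)$ over real $0\le t_1\le2x_1$, $0\le x\le\sigma/\gamma$. *)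

theory Defs
  imports Complex_Main
begin

text \<open>Entropy-type function E with logarithm base q (values outside (0,1) set to 0,
  matching E(0)=E(1)=0; only arguments in [0,1] are ever used).\<close>
definition Ent :: "real \<Rightarrow> real \<Rightarrow> real" where
  "Ent q x = (if 0 < x \<and> x < 1 then - x * log q x - (1 - x) * log q (1 - x) else 0)"

definition Zterm :: "real \<Rightarrow> real \<Rightarrow> real \<Rightarrow> real \<Rightarrow> real \<Rightarrow> real \<Rightarrow> real" where
  "Zterm q \<gamma> \<sigma> y x t1 =
     (if (y + x + t1) / (y + \<sigma> / \<gamma> + t1) \<ge> 1 - 1 / q
      then (y + \<sigma> / \<gamma> + t1) * Ent q ((y + x + t1) / (y + \<sigma> / \<gamma> + t1))
      else (y + \<sigma> / \<gamma> + t1) - (y + x + t1) * log q (q - 1))"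

definition Sfun :: "real \<Rightarrow> real \<Rightarrow> real \<Rightarrow> real \<Rightarrow> real \<Rightarrow> real \<Rightarrow> real" where
  "Sfun q \<gamma> \<sigma> y x t1 =
     Ent q t1 + (1 - t1) * Ent q ((y + x + t1) / (1 - t1)) + Zterm q \<gamma> \<sigma> y x t1"

text \<open>I_{y,x1}(sigma): the maximum of S over 0 <= t1 <= 2 x1, 0 <= x <= sigma/gamma
  (taken as the supremum over this compact parameter set).\<close>
definition Ifun :: "real \<Rightarrow> real \<Rightarrow> real \<Rightarrow> real \<Rightarrow> real \<Rightarrow> real" where
  "Ifun q \<gamma> y x1 \<sigma> =
     Sup {Sfun q \<gamma> \<sigma> y x t1 | x t1. 0 \<le> t1 \<and> t1 \<le> 2 * x1 \<and> 0 \<le> x \<and> x \<le> \<sigma> / \<gamma>}"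

end

theory Submission
  imports Defs
begin

text \<open>Write \<open>a = y + x + t\<^sub>1\<close> and \<open>b = y + \<sigma>/\<gamma> + t\<^sub>1\<close>; only the term \<open>Z\<close> depends on
  \<open>\<sigma>\<close>, through \<open>b\<close>. On the entropy branch \<open>b E(a/b) - b\<close> has derivative
  \<open>log\<^sub>q (b/(b-a)) - 1\<close>, which is nonnegative exactly up to the switching point
  \<open>b = a q/(q-1)\<close>; on the other branch \<open>Z - b = -a log\<^sub>q (q-1)\<close> is constant, and the
  two branches agree at the switching point. Hence \<open>Z - b\<close> is nondecreasing in \<open>b \<ge> a\<close>,
  so raising \<open>\<sigma>\<close> to \<open>\<sigma>'\<close> raises every value of \<open>S\<close> admissible for \<open>\<sigma>\<close> by at least
  \<open>(\<sigma>' - \<sigma>)/\<gamma>\<close>, while the admissible set only grows. Since \<open>S\<close> is bounded, the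
  supremum \<open>I\<close> grows by at least the same amount.\<close>

lemma neg_mult_ln_le: "0 < (z::real) \<Longrightarrow> - z * ln z \<le> 1 - z"
proof -
  assume z: "0 < z"
  have "ln (1/z) \<le> 1/z - 1" using z by (intro ln_le_minus_one) simp
  then have "z * (- ln z) \<le> z * (1/z - 1)" using z by (intro mult_left_mono) (auto simp: ln_div)
  also have "\<dots> = 1 - z" using z by (simp add: field_simps)
  finally show ?thesis by simp
qed

lemma Ent_le:
  assumes q: "1 < q" shows "Ent q z \<le> 1 / ln q"
proof (cases "0 < z \<and> z < 1")
  case True
  have "- z * ln z - (1 - z) * ln (1 - z) \<le> 1"
    using neg_mult_ln_le[of z] neg_mult_ln_le[of "1 - z"] True by (simp add: algebra_simps)
  moreover have "Ent q z = (- z * ln z - (1 - z) * ln (1 - z)) / ln q"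
    using True by (simp add: Ent_def log_def diff_divide_distrib)
  ultimately show ?thesis using q by (simp add: divide_right_mono)
next
  case False
  then have "Ent q z = 0" by (auto simp: Ent_def)
  then show ?thesis using q by simp
qed

lemma scaled_Ent_eq:
  assumes "0 < a" "a < b"
  shows "b * Ent q (a/b) = (b * ln b - (b - a) * ln (b - a) - a * ln a) / ln q"
proof -
  have "ln (a/b) = ln a - ln b" "ln (1 - a/b) = ln (b - a) - ln b"
    using assms by (simp_all add: ln_div diff_divide_eq_iff)
  moreover have "Ent q (a/b) = (- (a/b) * ln (a/b) - (1 - a/b) * ln (1 - a/b)) / ln q"
    using assms by (simp add: Ent_def log_def diff_divide_distrib)
  ultimately have "b * Ent q (a/b)
      = b * (- (a/b) * (ln a - ln b) - (1 - a/b) * (ln (b - a) - ln b)) / ln q"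
    by simp
  also have "b * (- (a/b) * (ln a - ln b) - (1 - a/b) * (ln (b - a) - ln b))
      = b * ln b - (b - a) * ln (b - a) - a * ln a"
    using assms by (simp add: field_simps)
  finally show ?thesis .
qed

definition Zfun :: "real \<Rightarrow> real \<Rightarrow> real \<Rightarrow> real" where
  "Zfun q a b = (if a / b \<ge> 1 - 1/q then b * Ent q (a/b) else b - a * log q (q - 1))"

lemma Zterm_eq_Zfun: "Zterm q \<gamma> \<sigma> y x t1 = Zfun q (y + x + t1) (y + \<sigma>/\<gamma> + t1)"
  by (simp add: Zterm_def Zfun_def)

lemma Zfun_branch_iff:
  assumes "1 < (q::real)" "0 < b"
  shows "a / b \<ge> 1 - 1/q \<longleftrightarrow> b \<le> a * q / (q - 1)"
  using assms by (simp add: field_simps)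

lemma scaled_Ent_minus_mono:
  assumes q: "1 < q" and a: "0 < a" "a < u" "u \<le> v" "v \<le> a * q / (q - 1)"
  shows "u * Ent q (a/u) - u \<le> v * Ent q (a/v) - v"
proof -
  define h where "h w = (w * ln w - (w - a) * ln (w - a) - a * ln a) / ln q - w" for w
  have "h u \<le> h v"
  proof (rule DERIV_nonneg_imp_nondecreasing[OF a(3)])
    fix w assume w: "u \<le> w" "w \<le> v"
    then have pos: "0 < w - a" "0 < w" using a by auto
    have "(h has_real_derivative ((ln w + 1) - (ln (w - a) + 1)) / ln q - 1) (at w)"
      unfolding h_def using pos q by (auto intro!: derivative_eq_intros)
    moreover have "(q - 1) * w \<le> (q - 1) * v" using w q by (intro mult_left_mono) auto
    then have "q \<le> w / (w - a)" using pos a q by (simp add: field_simps)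
    then have "ln q \<le> ln (w / (w - a))" using q by simp
    then have "ln q \<le> ln w - ln (w - a)" using pos by (simp add: ln_div)
    then have "0 \<le> ((ln w + 1) - (ln (w - a) + 1)) / ln q - 1" using q by (simp add: field_simps)
    ultimately show "\<exists>d. (h has_real_derivative d) (at w) \<and> 0 \<le> d" by blast
  qed
  then show ?thesis using scaled_Ent_eq[of a u q] scaled_Ent_eq[of a v q] a by (simp add: h_def)
qed

lemma scaled_Ent_minus_ge:
  assumes q: "1 < q" and a: "0 < a" "a < u" "u \<le> a * q / (q - 1)"
  shows "- a \<le> u * Ent q (a/u) - u"
proof -
  have pos: "0 < u - a" using a by simp
  have "q \<le> u / (u - a)" using a q pos by (simp add: field_simps)
  then have "ln q \<le> ln (u / (u - a))" using q by simp
  then have "ln q \<le> ln u - ln (u - a)" using pos a by (simp add: ln_div)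
  then have "(u - a) * ln q \<le> (u - a) * (ln u - ln (u - a))" using pos by simp
  moreover have "a * ln a \<le> a * ln u" using a by simp
  ultimately have "u - a \<le> (u * ln u - (u - a) * ln (u - a) - a * ln a) / ln q"
    using q by (simp add: field_simps)
  then show ?thesis using scaled_Ent_eq[of a u q] a by simp
qed

lemma Ent_one_minus_inverse:
  assumes q: "1 < q"
  shows "Ent q (1 - 1/q) = 1 - (1 - 1/q) * log q (q - 1)"
proof -
  have "1 - 1/q = (q - 1) / q" using q by (simp add: field_simps)
  then have "log q (1 - 1/q) = log q (q - 1) - 1" using q by (simp add: log_divide)
  moreover have "log q (1/q) = -1" using q by (simp add: log_divide)
  moreover have "0 < 1 - 1/q" "1 - 1/q < 1" using q by (auto simp: field_simps)
  ultimately have "Ent q (1 - 1/q) = - (1 - 1/q) * (log q (q - 1) - 1) - 1/q * (-1)"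
    by (simp add: Ent_def)
  then show ?thesis by (simp add: algebra_simps)
qed

lemma Zfun_minus_mono_below:
  assumes q: "1 < q" and a: "0 < a" "a \<le> u" "u \<le> v" "v \<le> a * q / (q - 1)"
  shows "Zfun q a u - u \<le> Zfun q a v - v"
proof -
  have Zfun_eq: "Zfun q a w = w * Ent q (a/w)" if "a \<le> w" "w \<le> a * q / (q - 1)" for w
    using Zfun_branch_iff[OF q, of w a] that a by (simp add: Zfun_def)
  have Zfun_a: "Zfun q a a = 0" using Zfun_eq[of a] a q by (simp add: Ent_def)
  consider "u = a" "v = a" | "u = a" "a < v" | "a < u" using a by linarith
  then show ?thesis
  proof cases
    case 2
    then show ?thesis using scaled_Ent_minus_ge[OF q a(1) 2(2) a(4)] Zfun_eq[of v] Zfun_a a by simp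
  next
    case 3
    then show ?thesis using scaled_Ent_minus_mono[OF q a(1) 3 a(3,4)] Zfun_eq[of u] Zfun_eq[of v] a
      by simp
  qed simp
qed

lemma Zfun_minus_const_above:
  assumes q: "1 < q" and a: "0 < a" "a * q / (q - 1) \<le> w"
  shows "Zfun q a w - w = - a * log q (q - 1)"
proof (cases "w = a * q / (q - 1)")
  case True
  have "a / w = 1 - 1/q" using a q unfolding True by (simp add: field_simps)
  then have "Zfun q a w = w * (1 - (1 - 1/q) * log q (q - 1))"
    using Ent_one_minus_inverse[OF q] by (simp add: Zfun_def)
  also have "\<dots> = w - (w * (1 - 1/q)) * log q (q - 1)" by (simp add: algebra_simps)
  also have "w * (1 - 1/q) = a" using True q by (simp add: field_simps)
  finally show ?thesis by simp
next
  case False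
  have "0 < a * q / (q - 1)" using a q by simp
  then show ?thesis using Zfun_branch_iff[OF q, of w a] False a by (simp add: Zfun_def)
qed

lemma Zfun_minus_mono:
  assumes q: "1 < q" and a: "0 < a" "a \<le> b" "b \<le> b'"
  shows "Zfun q a b - b \<le> Zfun q a b' - b'"
proof -
  define c where "c = a * q / (q - 1)"
  have "a \<le> c" using a q by (simp add: c_def field_simps)
  consider "b' \<le> c" | "b \<le> c" "c \<le> b'" | "c \<le> b" using a by linarith
  then show ?thesis
  proof cases
    case 1
    then show ?thesis using Zfun_minus_mono_below[OF q a] by (simp add: c_def)
  next
    case 2
    then have "Zfun q a b - b \<le> Zfun q a c - c"
      using Zfun_minus_mono_below[OF q a(1,2)] by (simp add: c_def)
    then show ?thesis using Zfun_minus_const_above[OF q a(1)] 2 by (simp add: c_def)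
  next
    case 3
    then show ?thesis using Zfun_minus_const_above[OF q a(1)] a by (simp add: c_def)
  qed
qed

lemma Sfun_increment:
  assumes q: "1 < q" and "0 < \<gamma>" "0 < y" "0 \<le> t1" "0 \<le> x" "x \<le> \<sigma> / \<gamma>" "\<sigma> \<le> \<sigma>'"
  shows "Sfun q \<gamma> \<sigma> y x t1 + (\<sigma>' - \<sigma>) / \<gamma> \<le> Sfun q \<gamma> \<sigma>' y x t1"
proof -
  have "\<sigma> / \<gamma> \<le> \<sigma>' / \<gamma>" using assms by (simp add: divide_right_mono)
  then have "Zfun q (y + x + t1) (y + \<sigma>/\<gamma> + t1) - (y + \<sigma>/\<gamma> + t1)
      \<le> Zfun q (y + x + t1) (y + \<sigma>'/\<gamma> + t1) - (y + \<sigma>'/\<gamma> + t1)"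
    using assms by (intro Zfun_minus_mono[OF q]) auto
  then show ?thesis by (simp add: Sfun_def Zterm_eq_Zfun diff_divide_distrib)
qed

lemma Sfun_le:
  assumes q: "2 \<le> q" and t1: "0 \<le> t1" "t1 \<le> 1"
    and a: "0 \<le> y + x + t1" and b: "0 \<le> y + \<sigma>/\<gamma> + t1" "y + \<sigma>/\<gamma> + t1 \<le> 1"
  shows "Sfun q \<gamma> \<sigma> y x t1 \<le> 3 / ln q + 1"
proof -
  have Ent: "Ent q z \<le> 1 / ln q" for z using Ent_le[of q z] q by simp
  have scaled: "c * Ent q z \<le> 1 / ln q" if "0 \<le> c" "c \<le> 1" for c z
  proof -
    have "c * Ent q z \<le> c * (1 / ln q)" using that Ent by (intro mult_left_mono)
    also have "\<dots> \<le> 1 / ln q" using that q by (intro mult_left_le_one_le) auto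
    finally show ?thesis .
  qed
  have "0 \<le> (y + x + t1) * log q (q - 1)" using a q by simp
  moreover have "(y + \<sigma>/\<gamma> + t1) * Ent q z \<le> 1 / ln q + 1" for z
    using scaled[OF b, of z] by linarith
  ultimately have "Zterm q \<gamma> \<sigma> y x t1 \<le> 1 / ln q + 1"
    using b q by (simp add: Zterm_def add_increasing)
  then show ?thesis
    using Ent[of t1] scaled[of "1 - t1" "(y + x + t1) / (1 - t1)"] t1 by (simp add: Sfun_def)
qed

lemma cSup_add_le_cSup:
  fixes A B :: "real set"
  assumes "A \<noteq> {}" "bdd_above B" "\<And>a. a \<in> A \<Longrightarrow> \<exists>b\<in>B. a + d \<le> b"
  shows "Sup A + d \<le> Sup B"
proof -
  have "Sup A \<le> Sup B - d"
  proof (rule cSup_least[OF assms(1)])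
    fix a assume "a \<in> A"
    then obtain b where "b \<in> B" "a + d \<le> b" using assms(3) by blast
    then show "a \<le> Sup B - d" using cSup_upper[OF _ assms(2)] by fastforce
  qed
  then show ?thesis by simp
qed

theorem lemma4p7:
  fixes q :: nat and \<gamma> y x1 :: real
  assumes "q \<ge> 2" and "\<gamma> > 0" and "y > 0" and "x1 \<ge> 0" and "y + 4 * x1 < 1"
  shows "strict_mono_on {\<sigma>. \<sigma> \<ge> 0 \<and> y + 4 * x1 + \<sigma> / \<gamma> < 1} (Ifun (real q) \<gamma> y x1)"
proof (rule strict_mono_onI)
  fix r s assume r: "r \<in> {\<sigma>. \<sigma> \<ge> 0 \<and> y + 4 * x1 + \<sigma> / \<gamma> < 1}"
    and s: "s \<in> {\<sigma>. \<sigma> \<ge> 0 \<and> y + 4 * x1 + \<sigma> / \<gamma> < 1}" and "r < s"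
  define A where "A \<sigma> = {Sfun q \<gamma> \<sigma> y x t1 | x t1. 0 \<le> t1 \<and> t1 \<le> 2 * x1 \<and> 0 \<le> x \<and> x \<le> \<sigma> / \<gamma>}"
    for \<sigma>
  have q: "2 \<le> real q" "1 < real q" using assms(1) by simp_all
  have "Sfun q \<gamma> r y 0 0 \<in> A r" using r assms(2,4) unfolding A_def by force
  then have "A r \<noteq> {}" by blast
  moreover have "bdd_above (A s)"
    unfolding A_def using s assms(2-5)
    by (intro bdd_aboveI[where M = "3 / ln q + 1"]) (auto intro!: Sfun_le[OF q(1)])
  moreover have "\<exists>b\<in>A s. a + (s - r) / \<gamma> \<le> b" if "a \<in> A r" for a
    using that \<open>r < s\<close> assms(2,3) order_trans[OF _ divide_right_mono[of r s \<gamma>]]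
    unfolding A_def by (fastforce intro!: Sfun_increment[OF q(2)])
  ultimately have "Sup (A r) + (s - r) / \<gamma> \<le> Sup (A s)" by (rule cSup_add_le_cSup)
  moreover have "0 < (s - r) / \<gamma>" using \<open>r < s\<close> assms(2) by simp
  ultimately show "Ifun q \<gamma> y x1 r < Ifun q \<gamma> y x1 s" by (simp add: Ifun_def A_def)
qed

end
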